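(* Let $a,b$ be elements of $\mathrm{Homeo}_+(I)$, or elements of $\mathrm{Homeo}_+(S^1)$ each having a fixed point, and suppose that for some integers $n_1,n_2,n_3,m_1,m_2,m_3$ with $m_1+m_2\neq m_3$ they satisfy $a^{n_1}b^{m_3}a^{n_2}=b^{m_1}a^{n_3}b^{m_2}$. If $J$ is a nontrivial interval contained in $\mathrm{Fix}(a)$, then either $J\subset\mathrm{Fix}(b)$ or $J\cap\mathrm{Fix}(b)=\emptyset$.
   Context: $\mathrm{Homeo}_+(M)$ denotes the group of orientation-preserving homeomorphisms of $M$; $I=[0,1]$; $\mathrm{Fix}(f)$ is the fixed point set of $f$. *)

theory Defs
  imports "HOL-Analysis.Analysis"
begin

definition zpow_on :: "'a set \<Rightarrow> ('a \<Rightarrow> 'a) \<Rightarrow> int \<Rightarrow> ('a \<Rightarrow> 'a)" where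
  "zpow_on M f n = (if 0 \<le> n then f ^^ nat n else (inv_into M f) ^^ nat (- n))"

definition fixset :: "'a set \<Rightarrow> ('a \<Rightarrow> 'a) \<Rightarrow> 'a set" where
  "fixset M f = {x \<in> M. f x = x}"

abbreviation unitI :: "real set" where
  "unitI \<equiv> {0..1}"

definition homeo_plus_I :: "(real \<Rightarrow> real) set" where
  "homeo_plus_I = {f. (\<exists>g. homeomorphism unitI unitI f g) \<and> strict_mono_on unitI f}"

abbreviation circle :: "complex set" where
  "circle \<equiv> sphere 0 1"

text \<open>Homeo_+(S^1): homeomorphisms of the circle admitting an increasing continuous lift
  through the covering map t \<mapsto> exp(2 pi i t).\<close>
definition homeo_plus_S1 :: "(complex \<Rightarrow> complex) set" where
  "homeo_plus_S1 = {f. (\<exists>g. homeomorphism circle circle f g) \<and>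
      (\<exists>F::real \<Rightarrow> real. continuous_on UNIV F \<and> strict_mono F \<and>
          (\<forall>t. f (cis (2 * pi * t)) = cis (2 * pi * F t)))}"

end

theory Submission
  imports Defs
begin

text \<open>
  Suppose b fixes a point c of J but not a point y of J. Walking from y towards c one meets
  a fixed point c' of b such that b has no fixed point strictly between c' and y; this gap
  lies in J, so a is the identity on it. For x in the gap close enough to c', the points
  b^m2 x, b^m3 x and b^(m1+m2) x stay in the gap, and the relation collapses to
  b^m3 x = b^(m1+m2) x. So b^(m1+m2) x is a periodic point of b of period
  m3 - (m1 + m2) \<noteq> 0 which is not fixed, impossible for an increasing map.

  On the circle the argument runs on lifts to the real line: J lifts to an interval K, the
  lift of a can be normalised to be the identity on K and the lift of b to fix a lift of c.
  The relation then only holds modulo the integers, which suffices because all points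
  compared lie within 1/2 of c'.
\<close>

lemma bij_betw_zpow_on:
  assumes "bij_betw f M M"
  shows "bij_betw (zpow_on M f n) M M"
  using assms by (simp add: zpow_on_def bij_betw_funpow bij_betw_inv_into)

lemma zpow_on_in:
  assumes "bij_betw f M M" "x \<in> M"
  shows "zpow_on M f n x \<in> M"
  using bij_betwE[OF bij_betw_zpow_on[OF assms(1)]] assms(2) by blast

lemma zpow_on_0 [simp]: "zpow_on M f 0 = id"
  by (simp add: zpow_on_def)

lemma zpow_on_add1:
  assumes f: "bij_betw f M M" and x: "x \<in> M"
  shows "zpow_on M f (n + 1) x = f (zpow_on M f n x)"
proof (cases "0 \<le> n")
  case True
  then show ?thesis by (simp add: zpow_on_def nat_add_distrib)
next
  case False
  then have "nat (- n) = Suc (nat (- (n + 1)))" by simp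
  then have "zpow_on M f n x = inv_into M f (zpow_on M f (n + 1) x)"
    using False by (simp add: zpow_on_def)
  moreover have "zpow_on M f (n + 1) x \<in> M" by (rule zpow_on_in[OF f x])
  ultimately show ?thesis
    using f by (simp add: bij_betw_def f_inv_into_f)
qed

lemma zpow_on_diff1:
  assumes f: "bij_betw f M M" and x: "x \<in> M"
  shows "zpow_on M f (n - 1) x = inv_into M f (zpow_on M f n x)"
  using zpow_on_add1[OF assms, of "n - 1"] zpow_on_in[OF assms, of "n - 1"]
    bij_betw_imp_inj_on[OF f] by simp

lemma zpow_on_add:
  assumes f: "bij_betw f M M" and x: "x \<in> M"
  shows "zpow_on M f (i + j) x = zpow_on M f i (zpow_on M f j x)"
proof (induction i rule: int_induct[where k = 0])
  case (step1 i)
  have "zpow_on M f (i + 1 + j) x = f (zpow_on M f (i + j) x)"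
    using zpow_on_add1[OF f x, of "i + j"] by (simp add: algebra_simps)
  also have "\<dots> = zpow_on M f (i + 1) (zpow_on M f j x)"
    using step1 zpow_on_add1[OF f zpow_on_in[OF f x]] by simp
  finally show ?case .
next
  case (step2 i)
  have "zpow_on M f (i - 1 + j) x = inv_into M f (zpow_on M f (i + j) x)"
    using zpow_on_diff1[OF f x, of "i + j"] by (simp add: algebra_simps)
  also have "\<dots> = zpow_on M f (i - 1) (zpow_on M f j x)"
    using step2 zpow_on_diff1[OF f zpow_on_in[OF f x]] by simp
  finally show ?case .
qed simp

lemma zpow_on_fixed:
  assumes "inj_on f M" "x \<in> M" "f x = x"
  shows "zpow_on M f n x = x"
proof -
  have "inv_into M f x = x" using assms by (metis inv_into_f_f)
  moreover have "(g ^^ k) x = x" if "g x = x" for g :: "'a \<Rightarrow> 'a" and k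
    using that by (induction k) auto
  ultimately show ?thesis
    using assms(3) by (simp add: zpow_on_def)
qed

lemma strict_mono_on_inv_into:
  fixes f :: "'a::linorder \<Rightarrow> 'b::linorder"
  assumes "strict_mono_on A f"
  shows "strict_mono_on (f ` A) (inv_into A f)"
proof (rule strict_mono_onI)
  fix r s assume "r \<in> f ` A" "s \<in> f ` A" "r < s"
  then show "inv_into A f r < inv_into A f s"
    using strict_mono_on_less[OF assms] inv_into_f_f[OF strict_mono_on_imp_inj_on[OF assms]]
    by auto
qed

lemma strict_mono_on_zpow_on:
  fixes f :: "'a::linorder \<Rightarrow> 'a"
  assumes f: "bij_betw f M M" and mono: "strict_mono_on M f"
  shows "strict_mono_on M (zpow_on M f n)"
proof (induction n rule: int_induct[where k = 0])
  case base
  then show ?case by (simp add: strict_mono_on_def)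
next
  case (step1 i)
  show ?case
  proof (rule strict_mono_onI)
    fix r s assume "r \<in> M" "s \<in> M" "r < s"
    then show "zpow_on M f (i + 1) r < zpow_on M f (i + 1) s"
      using step1 mono zpow_on_in[OF f] by (simp add: zpow_on_add1[OF f] strict_mono_onD)
  qed
next
  case (step2 i)
  have "strict_mono_on M (inv_into M f)"
    using strict_mono_on_inv_into[OF mono] f by (simp add: bij_betw_def)
  show ?case
  proof (rule strict_mono_onI)
    fix r s assume "r \<in> M" "s \<in> M" "r < s"
    then show "zpow_on M f (i - 1) r < zpow_on M f (i - 1) s"
      using step2 \<open>strict_mono_on M (inv_into M f)\<close> zpow_on_in[OF f]
      by (simp add: zpow_on_diff1[OF f] strict_mono_onD)
  qed
qed

lemma continuous_on_zpow_on:
  assumes f: "bij_betw f M M" and "continuous_on M f" "continuous_on M (inv_into M f)"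
  shows "continuous_on M (zpow_on M f n)"
proof (induction n rule: int_induct[where k = 0])
  case base
  then show ?case by (simp add: continuous_on_id)
next
  case (step1 i)
  have "continuous_on M (\<lambda>x. f (zpow_on M f i x))"
    using step1 assms(2) zpow_on_in[OF f] by (auto intro: continuous_on_compose2)
  then show ?case by (rule continuous_on_eq) (simp add: zpow_on_add1[OF f])
next
  case (step2 i)
  have "continuous_on M (\<lambda>x. inv_into M f (zpow_on M f i x))"
    using step2 assms(3) zpow_on_in[OF f] by (auto intro: continuous_on_compose2)
  then show ?case by (rule continuous_on_eq) (simp add: zpow_on_diff1[OF f])
qed

lemma strict_mono_on_funpow_fixed:
  fixes f :: "'a::linorder \<Rightarrow> 'a"
  assumes mono: "strict_mono_on M f" and f: "f ` M \<subseteq> M" and w: "w \<in> M"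
    and periodic: "(f ^^ Suc n) w = w"
  shows "f w = w"
proof -
  have orbit: "(f ^^ k) w \<in> M" for k
    using f w by (induction k) auto
  have up: "w < (f ^^ Suc k) w" if "w < f w" for k
  proof (induction k)
    case (Suc k)
    then have "f w < f ((f ^^ Suc k) w)" using strict_mono_onD[OF mono w orbit] by blast
    then show ?case using that by simp
  qed (use that in simp)
  have down: "(f ^^ Suc k) w < w" if "f w < w" for k
  proof (induction k)
    case (Suc k)
    then have "f ((f ^^ Suc k) w) < f w" using strict_mono_onD[OF mono orbit w] by blast
    then show ?case using that by simp
  qed (use that in simp)
  show ?thesis
    using up[of n] down[of n] periodic by (cases w "f w" rule: linorder_cases) auto
qed

lemma strict_mono_on_zpow_on_fixed:
  fixes f :: "'a::linorder \<Rightarrow> 'a"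
  assumes f: "bij_betw f M M" and mono: "strict_mono_on M f" and w: "w \<in> M"
    and "k \<noteq> 0" and periodic: "zpow_on M f k w = w"
  shows "f w = w"
proof -
  have "zpow_on M f (-k) w = w"
    using zpow_on_add[OF f w, of "-k" k] periodic by simp
  with periodic obtain k' where "k' > 0" "zpow_on M f k' w = w"
    using \<open>k \<noteq> 0\<close> by (metis neg_0_less_iff_less linorder_neqE)
  then have "(f ^^ Suc (nat k' - 1)) w = w"
    by (simp add: zpow_on_def Suc_nat_eq_nat_zadd1)
  then show ?thesis
    using strict_mono_on_funpow_fixed[OF mono _ w] f by (simp add: bij_betw_def)
qed

lemma zpow_on_semiconj:
  assumes f: "bij_betw f M M" and F: "bij_betw F N N" and p: "p ` N \<subseteq> M"
    and semiconj: "\<And>t. t \<in> N \<Longrightarrow> f (p t) = p (F t)" and t: "t \<in> N"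
  shows "zpow_on M f n (p t) = p (zpow_on N F n t)"
proof -
  have pt: "p t \<in> M" using p t by blast
  have inv: "inv_into M f (p s) = p (inv_into N F s)" if "s \<in> N" for s
  proof -
    have "inv_into N F s \<in> N" and "F (inv_into N F s) = s"
      using that F by (auto simp: bij_betw_def inv_into_into f_inv_into_f)
    then have "f (p (inv_into N F s)) = p s"
      using semiconj by metis
    then show ?thesis
      using p \<open>inv_into N F s \<in> N\<close> f by (metis bij_betw_imp_inj_on image_subset_iff inv_into_f_f)
  qed
  show ?thesis
  proof (induction n rule: int_induct[where k = 0])
    case (step1 i)
    then show ?case
      using semiconj zpow_on_in[OF F t] by (simp add: zpow_on_add1[OF f pt] zpow_on_add1[OF F t])
  next
    case (step2 i)
    then show ?case
      using inv zpow_on_in[OF F t] by (simp add: zpow_on_diff1[OF f pt] zpow_on_diff1[OF F t])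
  qed simp
qed

lemma segment_nearest_fixed_point:
  fixes f :: "'a::euclidean_space \<Rightarrow> 'a"
  assumes cont: "continuous_on (closed_segment c y) f" and "f c = c"
  obtains c' where "c' \<in> closed_segment c y" "f c' = c'" "\<forall>x\<in>open_segment c' y. f x \<noteq> x"
proof -
  define S where "S = {t \<in> closed_segment c y. f t - t = 0}"
  have "closed S"
    unfolding S_def using cont
    by (intro continuous_closed_preimage_constant continuous_intros) (auto intro: compact_imp_closed)
  moreover have "c \<in> S" using \<open>f c = c\<close> by (simp add: S_def)
  ultimately obtain c' where c': "c' \<in> S" and nearest: "\<And>t. t \<in> S \<Longrightarrow> dist y c' \<le> dist y t"
    using distance_attains_inf[of S y] by blast
  have free: "f x \<noteq> x" if x: "x \<in> open_segment c' y" for x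
  proof
    assume "f x = x"
    moreover have "x \<in> closed_segment c y"
      using x c' subset_closed_segment[of c' y c y] by (auto simp: S_def open_segment_def)
    ultimately have "dist y c' \<le> dist y x" by (simp add: S_def nearest)
    then show False using dist_in_open_segment[OF x] by (simp add: dist_commute)
  qed
  show ?thesis
    using c' free by (intro that[of c']) (simp_all add: S_def)
qed

lemma strict_mono_on_fixed_point_open_segment:
  fixes f :: "real \<Rightarrow> real"
  assumes mono: "strict_mono_on M f" and "c \<in> M" "f c = c" "x \<in> M"
    and "x \<in> open_segment c y" "dist (f x) c < dist y c"
  shows "f x \<in> open_segment c y"
  using assms strict_mono_onD[OF mono \<open>c \<in> M\<close> \<open>x \<in> M\<close>] strict_mono_onD[OF mono \<open>x \<in> M\<close> \<open>c \<in> M\<close>]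
  by (auto simp: open_segment_eq_real_ivl dist_real_def split: if_splits)

lemma zpow_on_near_fixed_point:
  fixes f :: "real \<Rightarrow> real"
  assumes f: "bij_betw f M M" and "continuous_on M f" "continuous_on M (inv_into M f)"
    and mono: "strict_mono_on M f" and seg: "closed_segment c y \<subseteq> M" and "f c = c" "c \<noteq> y"
    and "finite Js" "\<epsilon> > 0"
  obtains x where "x \<in> open_segment c y"
    "\<forall>j\<in>Js. zpow_on M f j x \<in> open_segment c y \<and> dist (zpow_on M f j x) c < \<epsilon>"
proof -
  define r where "r = min \<epsilon> (dist y c)"
  have "r > 0" using \<open>\<epsilon> > 0\<close> \<open>c \<noteq> y\<close> by (simp add: r_def)
  have c: "c \<in> M" using seg by auto
  have "\<forall>\<^sub>F x in at c within M. dist (zpow_on M f j x) c < r" for j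
  proof -
    have "(zpow_on M f j \<longlongrightarrow> zpow_on M f j c) (at c within M)"
      using continuous_on_zpow_on[OF assms(1-3)] c by (simp add: continuous_on_def)
    moreover have "zpow_on M f j c = c"
      using zpow_on_fixed[OF bij_betw_imp_inj_on[OF f] c \<open>f c = c\<close>] .
    ultimately show ?thesis using tendstoD \<open>r > 0\<close> by fastforce
  qed
  then have "\<forall>\<^sub>F x in at c within M. \<forall>j\<in>Js. dist (zpow_on M f j x) c < r"
    using \<open>finite Js\<close> by (simp add: eventually_ball_finite)
  then have "\<forall>\<^sub>F x in at c within open_segment c y.
      x \<in> open_segment c y \<and> (\<forall>j\<in>Js. dist (zpow_on M f j x) c < r)"
    using seg by (auto simp: eventually_at_filter open_segment_def elim: eventually_mono
      intro: filter_leD[OF at_le, rotated])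
  moreover have "at c within open_segment c y \<noteq> bot"
  proof -
    have "open_segment c y - {c} = open_segment c y" by (auto simp: open_segment_def)
    then show ?thesis using \<open>c \<noteq> y\<close> by (simp add: at_within_eq_bot_iff)
  qed
  ultimately obtain x where x: "x \<in> open_segment c y" and near: "\<forall>j\<in>Js. dist (zpow_on M f j x) c < r"
    using eventually_happens' by blast
  have "x \<in> M" using x seg by (auto simp: open_segment_def)
  show ?thesis
  proof (rule that[OF x], intro ballI conjI)
    fix j assume "j \<in> Js"
    then show "dist (zpow_on M f j x) c < \<epsilon>" using near by (simp add: r_def)
    show "zpow_on M f j x \<in> open_segment c y"
      using strict_mono_on_fixed_point_open_segment[OF strict_mono_on_zpow_on[OF f mono] c
          zpow_on_fixed[OF bij_betw_imp_inj_on[OF f] c \<open>f c = c\<close>] \<open>x \<in> M\<close> x]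
        near \<open>j \<in> Js\<close> by (simp add: r_def)
  qed
qed

lemma no_fixed_point_free_gap:
  fixes a b :: "real \<Rightarrow> real"
  assumes a: "inj_on a M"
    and b: "bij_betw b M M" "continuous_on M b" "continuous_on M (inv_into M b)" "strict_mono_on M b"
    and rel: "\<And>x. x \<in> M \<Longrightarrow> zpow_on M a n1 (zpow_on M b m3 (zpow_on M a n2 x))
                - zpow_on M b m1 (zpow_on M a n3 (zpow_on M b m2 x)) \<in> \<int>"
    and "m1 + m2 \<noteq> m3"
    and gap: "closed_segment c y \<subseteq> M" "b c = c" "c \<noteq> y"
      "\<forall>x\<in>open_segment c y. a x = x \<and> b x \<noteq> x"
  shows False
proof -
  define B where "B = zpow_on M b"
  obtain x where x: "x \<in> open_segment c y"
    and near: "\<forall>j\<in>{m2, m3, m1 + m2}. B j x \<in> open_segment c y \<and> dist (B j x) c < 1/2"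
    using zpow_on_near_fixed_point[OF b gap(1-3), of "{m2, m3, m1 + m2}" "1/2"]
    unfolding B_def by auto
  have in_M: "z \<in> M" if "z \<in> open_segment c y" for z
    using that gap(1) by (auto simp: open_segment_def)
  have a_fixes: "zpow_on M a n z = z" if "z \<in> open_segment c y" for n z
    using zpow_on_fixed[OF a in_M[OF that]] gap(4) that by blast
  have "x \<in> M" using in_M[OF x] .
  have "zpow_on M a n1 (B m3 (zpow_on M a n2 x)) = B m3 x"
    using a_fixes x near by simp
  moreover have "B m1 (zpow_on M a n3 (B m2 x)) = B (m1 + m2) x"
    using a_fixes near zpow_on_add[OF b(1) \<open>x \<in> M\<close>, of m1 m2] by (simp add: B_def)
  ultimately have "B m3 x - B (m1 + m2) x \<in> \<int>"
    using rel[OF \<open>x \<in> M\<close>] by (simp add: B_def)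
  moreover have "\<bar>B m3 x - B (m1 + m2) x\<bar> < 1"
    using near dist_triangle_half_l[of "B m3 x" c 1 "B (m1 + m2) x"] by (simp add: dist_real_def)
  ultimately have "B m3 x = B (m1 + m2) x"
    using Ints_nonzero_abs_less1 by fastforce
  then have "zpow_on M b (m3 - (m1 + m2)) (B (m1 + m2) x) = B (m1 + m2) x"
    using zpow_on_add[OF b(1) \<open>x \<in> M\<close>, of "m3 - (m1 + m2)" "m1 + m2"] by (simp add: B_def)
  moreover have "B (m1 + m2) x \<in> M" unfolding B_def using b(1) \<open>x \<in> M\<close> by (rule zpow_on_in)
  moreover have "m3 - (m1 + m2) \<noteq> 0" using \<open>m1 + m2 \<noteq> m3\<close> by simp
  ultimately have "b (B (m1 + m2) x) = B (m1 + m2) x"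
    using strict_mono_on_zpow_on_fixed[OF b(1,4)] by blast
  with gap(4) near show False by simp
qed

lemma fixed_points_dichotomy_mod_Ints:
  fixes a b :: "real \<Rightarrow> real"
  assumes a: "inj_on a M"
    and b: "bij_betw b M M" "continuous_on M b" "continuous_on M (inv_into M b)" "strict_mono_on M b"
    and rel: "\<And>x. x \<in> M \<Longrightarrow> zpow_on M a n1 (zpow_on M b m3 (zpow_on M a n2 x))
                - zpow_on M b m1 (zpow_on M a n3 (zpow_on M b m2 x)) \<in> \<int>"
    and "m1 + m2 \<noteq> m3" and K: "K \<subseteq> M" "connected K" "\<forall>x\<in>K. a x = x"
  shows "(\<forall>x\<in>K. b x = x) \<or> (\<forall>x\<in>K. b x \<noteq> x)"
proof (rule ccontr)
  assume "\<not> ?thesis"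
  then obtain c y where "c \<in> K" "b c = c" "y \<in> K" "b y \<noteq> y" by blast
  have "convex K"
    using K(2) is_interval_connected_1 is_interval_convex_1 by blast
  then have cy: "closed_segment c y \<subseteq> K"
    using \<open>c \<in> K\<close> \<open>y \<in> K\<close> by (rule closed_segment_subset[rotated 2])
  then have "continuous_on (closed_segment c y) b"
    using continuous_on_subset[OF b(2)] K(1) by blast
  then obtain c' where "c' \<in> closed_segment c y" "b c' = c'"
    and free: "\<forall>x\<in>open_segment c' y. b x \<noteq> x"
    using \<open>b c = c\<close> by (rule segment_nearest_fixed_point)
  then have "c' \<in> K" using cy by blast
  have "c' \<noteq> y" using \<open>b c' = c'\<close> \<open>b y \<noteq> y\<close> by blast
  have seg: "closed_segment c' y \<subseteq> K"
    using \<open>convex K\<close> \<open>c' \<in> K\<close> \<open>y \<in> K\<close> by (rule closed_segment_subset[rotated 2])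
  then have "\<forall>x\<in>open_segment c' y. a x = x \<and> b x \<noteq> x"
    using free K(3) by (auto simp: open_segment_def)
  with seg K(1) show False
    using no_fixed_point_free_gap[OF a b rel \<open>m1 + m2 \<noteq> m3\<close> _ \<open>b c' = c'\<close> \<open>c' \<noteq> y\<close>] by blast
qed

lemma homeomorphism_imp_bij_betw: "homeomorphism S T f g \<Longrightarrow> bij_betw f S T"
  by (rule bij_betwI[where g = g]) (auto simp: homeomorphism_def)

lemma homeomorphism_continuous_on_inv_into:
  assumes hom: "homeomorphism S T f g"
  shows "continuous_on T (inv_into S f)"
proof (rule continuous_on_eq)
  show "continuous_on T g" using hom by (rule homeomorphism_cont2)
  fix y assume "y \<in> T"
  then show "g y = inv_into S f y"
    using hom inv_into_f_f[OF bij_betw_imp_inj_on[OF homeomorphism_imp_bij_betw[OF hom]]]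
    by (metis homeomorphism_apply2 homeomorphism_image2 imageI)
qed

lemma cis_2pi_eq_iff: "cis (2 * pi * u) = cis (2 * pi * v) \<longleftrightarrow> u - v \<in> \<int>"
proof -
  have "cis (2 * pi * u) = cis (2 * pi * v) \<longleftrightarrow>
      sin (2 * pi * u) = sin (2 * pi * v) \<and> cos (2 * pi * u) = cos (2 * pi * v)"
    by (auto simp: complex_eq_iff)
  also have "\<dots> \<longleftrightarrow> (\<exists>n::int. 2 * pi * u = 2 * pi * v + 2 * pi * n)"
    by (rule sin_cos_eq_iff)
  also have "\<dots> \<longleftrightarrow> (\<exists>n::int. u - v = n)"
  proof (intro ex_cong1)
    fix n :: int
    have "2 * pi * u = 2 * pi * v + 2 * pi * n \<longleftrightarrow> 2 * pi * u = 2 * pi * (v + n)"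
      by (simp only: distrib_left)
    also have "\<dots> \<longleftrightarrow> u - v = n" by auto
    finally show "2 * pi * u = 2 * pi * v + 2 * pi * n \<longleftrightarrow> u - v = n" .
  qed
  finally show ?thesis by (auto elim!: Ints_cases)
qed

lemma circle_eq_cis_image: "circle = range (\<lambda>t. cis (2 * pi * t))"
proof
  show "circle \<subseteq> range (\<lambda>t. cis (2 * pi * t))"
  proof
    fix z :: complex assume "z \<in> circle"
    then have "z = cis (2 * pi * (Arg2pi z / (2 * pi)))"
      by (simp add: complex_norm_eq_1_exp cis_conv_exp)
    then show "z \<in> range (\<lambda>t. cis (2 * pi * t))" by (rule range_eqI)
  qed
qed auto

definition circle_lift :: "(complex \<Rightarrow> complex) \<Rightarrow> (real \<Rightarrow> real) \<Rightarrow> bool" where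
  "circle_lift f F \<longleftrightarrow> continuous_on UNIV F \<and> strict_mono F \<and>
     (\<forall>t. f (cis (2 * pi * t)) = cis (2 * pi * F t))"

lemma circle_lift_shift:
  assumes "circle_lift f F" "N \<in> \<int>"
  shows "circle_lift f (\<lambda>t. F t - N)"
proof -
  have "cis (2 * pi * (F t - N)) = cis (2 * pi * F t)" for t
    using \<open>N \<in> \<int>\<close> by (simp add: cis_2pi_eq_iff)
  then show ?thesis
    using assms(1) by (auto simp: circle_lift_def strict_mono_def intro: continuous_intros)
qed

lemma circle_lift_normalize:
  assumes F: "circle_lift f F" and K: "connected K" "t0 \<in> K"
    and fixed: "\<forall>t\<in>K. f (cis (2 * pi * t)) = cis (2 * pi * t)"
  obtains F' where "circle_lift f F'" "\<forall>t\<in>K. F' t = t"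
proof -
  have Ints: "F t - t \<in> \<int>" if "t \<in> K" for t
    using F fixed that cis_2pi_eq_iff by (auto simp: circle_lift_def)
  have "(\<lambda>t. F t - t) constant_on K"
  proof (rule continuous_discrete_range_constant[OF K(1)])
    show "continuous_on K (\<lambda>t. F t - t)"
      using F by (auto simp: circle_lift_def intro!: continuous_intros elim: continuous_on_subset)
    show "\<exists>e>0. \<forall>s. s \<in> K \<and> F s - s \<noteq> F t - t \<longrightarrow> e \<le> norm (F s - s - (F t - t))"
      if "t \<in> K" for t
    proof (intro exI[of _ 1] conjI allI impI)
      fix s assume "s \<in> K \<and> F s - s \<noteq> F t - t"
      then show "1 \<le> norm (F s - s - (F t - t))"
        using Ints_nonzero_abs_ge1[OF Ints_diff[OF Ints[of s] Ints[of t]]] that by auto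
    qed simp
  qed
  then obtain N where N: "\<forall>t\<in>K. F t - t = N" by (auto simp: constant_on_def)
  show ?thesis
  proof (rule that)
    show "circle_lift f (\<lambda>t. F t - N)"
      using F Ints[OF K(2)] N K(2) by (intro circle_lift_shift) auto
    show "\<forall>t\<in>K. F t - N = t" using N by auto
  qed
qed

lemma circle_lift_add1_ge:
  assumes F: "circle_lift f F"
  shows "F t + 1 \<le> F (t + 1)"
proof -
  have "cis (2 * pi * (t + 1)) = cis (2 * pi * t)" by (simp add: cis_2pi_eq_iff)
  then have "cis (2 * pi * F (t + 1)) = cis (2 * pi * F t)"
    using F unfolding circle_lift_def by metis
  then have "F (t + 1) - F t \<in> \<int>" by (simp add: cis_2pi_eq_iff)
  moreover have "F t < F (t + 1)" using F by (simp add: circle_lift_def strict_mono_less)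
  ultimately show ?thesis using Ints_nonzero_abs_ge1[of "F (t + 1) - F t"] by simp
qed

lemma circle_lift_add_nat_ge:
  assumes F: "circle_lift f F"
  shows "F t + real n \<le> F (t + real n)"
proof (induction n)
  case (Suc n)
  then show ?case using circle_lift_add1_ge[OF F, of "t + real n"] by (simp add: algebra_simps)
qed simp

lemma circle_lift_bij:
  assumes F: "circle_lift f F"
  shows "bij F"
proof (rule bijI)
  show "inj F" using F by (simp add: circle_lift_def strict_mono_imp_inj_on)
  have "s \<in> range F" for s
  proof -
    obtain n :: nat where n: "\<bar>s - F 0\<bar> \<le> real n" using real_arch_simple by blast
    have "F (- real n) \<le> s" "s \<le> F (real n)"
      using circle_lift_add_nat_ge[OF F, of 0 n] circle_lift_add_nat_ge[OF F, of "- real n" n] n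
      by auto
    moreover have "continuous_on {- real n..real n} F"
      using F by (auto simp: circle_lift_def elim: continuous_on_subset)
    ultimately show ?thesis using IVT'[of F "- real n" s "real n"] by force
  qed
  then show "surj F" by blast
qed

lemma circle_lift_continuous_on_inv:
  assumes F: "circle_lift f F"
  shows "continuous_on UNIV (inv F)"
proof (rule continuous_at_imp_continuous_on, rule ballI)
  fix y :: real
  have "isCont F z" for z
    using F by (simp add: circle_lift_def continuous_on_eq_continuous_at)
  moreover have "inv F (F z) = z" for z
    using bij_is_inj[OF circle_lift_bij[OF F]] by simp
  ultimately have "isCont (inv F) (F (inv F y))"
    by (intro isCont_inverse_function[where f = F and d = 1]) auto
  then show "isCont (inv F) y"
    using bij_is_surj[OF circle_lift_bij[OF F]] by (simp add: surj_f_inv_f)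
qed

lemma circle_lift_zpow_on:
  assumes f: "bij_betw f circle circle" and F: "circle_lift f F"
  shows "zpow_on circle f n (cis (2 * pi * t)) = cis (2 * pi * zpow_on UNIV F n t)"
proof (rule zpow_on_semiconj[OF f, where p = "\<lambda>t. cis (2 * pi * t)" and t = t, simplified])
  show "bij_betw F UNIV UNIV" using circle_lift_bij[OF F] .
  show "f (cis (2 * pi * s)) = cis (2 * pi * F s)" for s
    using F by (simp add: circle_lift_def)
qed auto

lemma connected_subset_circle_lift:
  assumes J: "J \<subseteq> circle" "connected J"
  obtains K where "connected K" "(\<lambda>t. cis (2 * pi * t)) ` K = J"
proof (cases "J = circle")
  case True
  then show ?thesis using that[of UNIV] circle_eq_cis_image by simp
next
  case False
  then obtain p where p: "p \<in> circle" "p \<notin> J" using J(1) by blast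
  \<comment> \<open>a branch of the argument, divided by 2 pi, with its cut at the point p outside J\<close>
  define arg where "arg z = (Arg2pi p + Arg2pi (z / p)) / (2 * pi)" for z
  have unit: "cis (Arg2pi w) = w" if "norm w = 1" for w
    using that by (simp add: complex_norm_eq_1_exp cis_conv_exp)
  have cis_arg: "cis (2 * pi * arg z) = z" if "z \<in> circle" for z
  proof -
    have "cis (2 * pi * arg z) = cis (Arg2pi p) * cis (Arg2pi (z / p))"
      by (simp add: arg_def cis_mult)
    also have "\<dots> = p * (z / p)"
      using that p by (simp add: unit norm_divide)
    finally show ?thesis using p by auto
  qed
  have "isCont arg z" if "z \<in> J" for z
  proof -
    have "z / p \<notin> \<real>\<^sub>\<ge>\<^sub>0"
    proof
      assume "z / p \<in> \<real>\<^sub>\<ge>\<^sub>0"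
      moreover have "norm (z / p) = 1" using that J(1) p by (auto simp: norm_divide)
      ultimately have "z / p = 1" by (auto simp: nonneg_Reals_def)
      then show False using that p by auto
    qed
    moreover have "isCont (\<lambda>z. z / p) z"
      using p by (intro continuous_intros) auto
    ultimately have "isCont (\<lambda>z. Arg2pi (z / p)) z"
      using continuous_at_compose[of z "\<lambda>z. z / p" Arg2pi] continuous_at_Arg2pi
      by (simp add: o_def)
    then show ?thesis unfolding arg_def by (intro continuous_intros) auto
  qed
  then have "connected (arg ` J)"
    using J(2) by (intro connected_continuous_image continuous_at_imp_continuous_on) auto
  moreover have "(\<lambda>t. cis (2 * pi * t)) ` arg ` J = J"
    using cis_arg J(1) by (force simp: image_image)
  ultimately show ?thesis using that by blast
qed

lemma homeo_plus_I_fixset_dichotomy: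
  assumes a: "a \<in> homeo_plus_I" and b: "b \<in> homeo_plus_I" and "m1 + m2 \<noteq> m3"
    and rel: "\<forall>x\<in>unitI. (zpow_on unitI a n1 \<circ> zpow_on unitI b m3 \<circ> zpow_on unitI a n2) x
                       = (zpow_on unitI b m1 \<circ> zpow_on unitI a n3 \<circ> zpow_on unitI b m2) x"
    and J: "J \<subseteq> fixset unitI a" "connected J"
  shows "J \<subseteq> fixset unitI b \<or> J \<inter> fixset unitI b = {}"
proof -
  obtain ga gb where ha: "homeomorphism unitI unitI a ga" and hb: "homeomorphism unitI unitI b gb"
    and mono: "strict_mono_on unitI b"
    using a b by (auto simp: homeo_plus_I_def)
  have "(\<forall>x\<in>J. b x = x) \<or> (\<forall>x\<in>J. b x \<noteq> x)"
  proof (rule fixed_points_dichotomy_mod_Ints[OF _ _ _ _ mono _ \<open>m1 + m2 \<noteq> m3\<close> _ J(2)])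
    show "inj_on a unitI" using homeomorphism_imp_bij_betw[OF ha] by (rule bij_betw_imp_inj_on)
    show "bij_betw b unitI unitI" using hb by (rule homeomorphism_imp_bij_betw)
    show "continuous_on unitI b" using hb by (rule homeomorphism_cont1)
    show "continuous_on unitI (inv_into unitI b)" using hb by (rule homeomorphism_continuous_on_inv_into)
    show "zpow_on unitI a n1 (zpow_on unitI b m3 (zpow_on unitI a n2 x))
        - zpow_on unitI b m1 (zpow_on unitI a n3 (zpow_on unitI b m2 x)) \<in> \<int>" if "x \<in> unitI" for x
      using rel that by simp
    show "J \<subseteq> unitI" "\<forall>x\<in>J. a x = x" using J(1) by (auto simp: fixset_def)
  qed
  then show ?thesis using J(1) by (auto simp: fixset_def)
qed

lemma homeo_plus_S1_fixset_dichotomy: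
  assumes a: "a \<in> homeo_plus_S1" and b: "b \<in> homeo_plus_S1" and "m1 + m2 \<noteq> m3"
    and rel: "\<forall>x\<in>circle. (zpow_on circle a n1 \<circ> zpow_on circle b m3 \<circ> zpow_on circle a n2) x
                       = (zpow_on circle b m1 \<circ> zpow_on circle a n3 \<circ> zpow_on circle b m2) x"
    and J: "J \<subseteq> fixset circle a" "connected J"
  shows "J \<subseteq> fixset circle b \<or> J \<inter> fixset circle b = {}"
proof (rule disjCI)
  assume "J \<inter> fixset circle b \<noteq> {}"
  then obtain c where "c \<in> J" "b c = c" by (auto simp: fixset_def)
  have "J \<subseteq> circle" using J(1) by (auto simp: fixset_def)
  then obtain K where K: "connected K" and J_eq: "(\<lambda>t. cis (2 * pi * t)) ` K = J"
    using J(2) by (rule connected_subset_circle_lift)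
  obtain tc where tc: "tc \<in> K" "cis (2 * pi * tc) = c" using \<open>c \<in> J\<close> J_eq by auto
  obtain ga FA0 where ha: "homeomorphism circle circle a ga" and "circle_lift a FA0"
    using a by (auto simp: homeo_plus_S1_def circle_lift_def)
  obtain gb FB0 where hb: "homeomorphism circle circle b gb" and "circle_lift b FB0"
    using b by (auto simp: homeo_plus_S1_def circle_lift_def)
  have fixed_a: "\<forall>t\<in>K. a (cis (2 * pi * t)) = cis (2 * pi * t)"
    using J(1) J_eq by (auto simp: fixset_def)
  obtain FA where FA: "circle_lift a FA" "\<forall>t\<in>K. FA t = t"
    using \<open>circle_lift a FA0\<close> K tc(1) fixed_a by (rule circle_lift_normalize)
  have fixed_b: "\<forall>t\<in>{tc}. b (cis (2 * pi * t)) = cis (2 * pi * t)"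
    using \<open>b c = c\<close> tc by simp
  obtain FB where FB: "circle_lift b FB" "\<forall>t\<in>{tc}. FB t = t"
    using \<open>circle_lift b FB0\<close> connected_sing singletonI fixed_b by (rule circle_lift_normalize)
  have "(\<forall>t\<in>K. FB t = t) \<or> (\<forall>t\<in>K. FB t \<noteq> t)"
  proof (rule fixed_points_dichotomy_mod_Ints[where M = UNIV, OF _ _ _ _ _ _ \<open>m1 + m2 \<noteq> m3\<close> subset_UNIV K])
    show "inj_on FA UNIV" using circle_lift_bij[OF FA(1)] by (rule bij_is_inj)
    show "bij_betw FB UNIV UNIV" using FB(1) by (rule circle_lift_bij)
    show "continuous_on UNIV FB" "strict_mono_on UNIV FB" using FB(1) by (simp_all add: circle_lift_def)
    show "continuous_on UNIV (inv_into UNIV FB)" using FB(1) by (rule circle_lift_continuous_on_inv)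
    show "zpow_on UNIV FA n1 (zpow_on UNIV FB m3 (zpow_on UNIV FA n2 t))
        - zpow_on UNIV FB m1 (zpow_on UNIV FA n3 (zpow_on UNIV FB m2 t)) \<in> \<int>" for t
    proof -
      have "cis (2 * pi * zpow_on UNIV FA n1 (zpow_on UNIV FB m3 (zpow_on UNIV FA n2 t)))
          = cis (2 * pi * zpow_on UNIV FB m1 (zpow_on UNIV FA n3 (zpow_on UNIV FB m2 t)))"
        using rel[rule_format, of "cis (2 * pi * t)"]
        by (simp add: circle_lift_zpow_on[OF homeomorphism_imp_bij_betw[OF ha] FA(1)]
            circle_lift_zpow_on[OF homeomorphism_imp_bij_betw[OF hb] FB(1)])
      then show ?thesis by (simp only: cis_2pi_eq_iff)
    qed
    show "\<forall>t\<in>K. FA t = t" using FA(2) .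
  qed
  with tc FB(2) have "\<forall>t\<in>K. FB t = t" by auto
  with FB(1) J_eq show "J \<subseteq> fixset circle b" by (auto simp: fixset_def circle_lift_def)
qed

theorem lemma3p7:
  shows "(\<forall>(a::real \<Rightarrow> real) b (n1::int) n2 n3 (m1::int) m2 m3 J.
            a \<in> homeo_plus_I \<and> b \<in> homeo_plus_I \<and> m1 + m2 \<noteq> m3 \<and>
            (\<forall>x\<in>unitI. (zpow_on unitI a n1 \<circ> zpow_on unitI b m3 \<circ> zpow_on unitI a n2) x
                       = (zpow_on unitI b m1 \<circ> zpow_on unitI a n3 \<circ> zpow_on unitI b m2) x) \<and>
            J \<subseteq> fixset unitI a \<and> connected J \<and> (\<exists>x\<in>J. \<exists>y\<in>J. x \<noteq> y)
          \<longrightarrow> J \<subseteq> fixset unitI b \<or> J \<inter> fixset unitI b = {})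
       \<and>
       (\<forall>(a::complex \<Rightarrow> complex) b (n1::int) n2 n3 (m1::int) m2 m3 J.
            a \<in> homeo_plus_S1 \<and> b \<in> homeo_plus_S1 \<and>
            fixset circle a \<noteq> {} \<and> fixset circle b \<noteq> {} \<and> m1 + m2 \<noteq> m3 \<and>
            (\<forall>x\<in>circle. (zpow_on circle a n1 \<circ> zpow_on circle b m3 \<circ> zpow_on circle a n2) x
                       = (zpow_on circle b m1 \<circ> zpow_on circle a n3 \<circ> zpow_on circle b m2) x) \<and>
            J \<subseteq> fixset circle a \<and> connected J \<and> (\<exists>x\<in>J. \<exists>y\<in>J. x \<noteq> y)
          \<longrightarrow> J \<subseteq> fixset circle b \<or> J \<inter> fixset circle b = {})"
  by (intro conjI allI impI; elim conjE;
      rule homeo_plus_I_fixset_dichotomy homeo_plus_S1_fixset_dichotomy; assumption)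

end
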